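(* Let $n,t\in\mathbb N$, let $\mathcal H$ be an $n$-vertex hypergraph with more than $tn$ edges, and let $r:=e(\mathcal H)-tn$. If there exist distinct pairwise intersecting edges $e_1,\dots,e_{2r+2}\in\mathcal H$ such that $\{e_{2i-1},e_{2i}\}$ is $t$-useful for every $i\in[r+1]$, then $\chi'_\ell(\mathcal H)<tn$.
   Context: A hypergraph $\mathcal H$ has a finite vertex set $V(\mathcal H)$ and a finite set of edges, each edge $e$ with a nonempty set $V(e)\subseteq V(\mathcal H)$ (multiple edges allowed); $n$-vertex means $|V(\mathcal H)|=n$; $e(\mathcal H)$ is the number of edges. Edges $f_1,\dots,f_k$ are pairwise intersecting if their vertex sets pairwise intersect. $N(e)$ is the set of edges $f\neq e$ with $V(e)\cap V(f)\neq\emptyset$. In an $n$-vertex hypergraph, a pair $\{e,f\}$ of distinct edges is $t$-useful if $V(e)\cap V(f)\neq\emptyset$ and $|N(e)\cap N(f)|\leq tn-3$. The list chromatic index $\chi'_\ell(\mathcal H)$ is the least $s$ such that for every assignment of lists $C(e)$ with $|C(e)|\geq s$ there is a proper edge-colouring $\phi$ (distinct edges of equal colour have disjoint vertex sets) with $\phi(e)\in C(e)$ for all $e$. $[m]=\{1,\dots,m\}$. *)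

theory Defs
  imports Main
begin

text \<open>A hypergraph is given by a vertex set VH, an edge index set E (so that
multiple edges are allowed) and an incidence map V assigning to each edge its
vertex set.\<close>

definition hypergraph :: "'v set \<Rightarrow> 'e set \<Rightarrow> ('e \<Rightarrow> 'v set) \<Rightarrow> bool" where
  "hypergraph VH E V \<longleftrightarrow> finite VH \<and> finite E \<and>
     (\<forall>e\<in>E. V e \<noteq> {} \<and> V e \<subseteq> VH)"

definition nbhd :: "'e set \<Rightarrow> ('e \<Rightarrow> 'v set) \<Rightarrow> 'e \<Rightarrow> 'e set" where
  "nbhd E V e = {f \<in> E. f \<noteq> e \<and> V e \<inter> V f \<noteq> {}}"

definition t_useful :: "'v set \<Rightarrow> 'e set \<Rightarrow> ('e \<Rightarrow> 'v set) \<Rightarrow> nat \<Rightarrow> 'e \<Rightarrow> 'e \<Rightarrow> bool" where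
  "t_useful VH E V t e f \<longleftrightarrow> e \<in> E \<and> f \<in> E \<and> e \<noteq> f \<and> V e \<inter> V f \<noteq> {} \<and>
     int (card (nbhd E V e \<inter> nbhd E V f)) \<le> int t * int (card VH) - 3"

definition proper_edge_colouring :: "'e set \<Rightarrow> ('e \<Rightarrow> 'v set) \<Rightarrow> ('e \<Rightarrow> 'c) \<Rightarrow> bool" where
  "proper_edge_colouring E V \<phi> \<longleftrightarrow>
     (\<forall>e\<in>E. \<forall>f\<in>E. e \<noteq> f \<and> \<phi> e = \<phi> f \<longrightarrow> V e \<inter> V f = {})"

definition list_colourable :: "'e set \<Rightarrow> ('e \<Rightarrow> 'v set) \<Rightarrow> nat \<Rightarrow> bool" where
  "list_colourable E V s \<longleftrightarrow>
     (\<forall>C :: 'e \<Rightarrow> nat set. (\<forall>e\<in>E. finite (C e) \<and> card (C e) \<ge> s) \<longrightarrow>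
        (\<exists>\<phi>. (\<forall>e\<in>E. \<phi> e \<in> C e) \<and> proper_edge_colouring E V \<phi>))"

definition list_chromatic_index :: "'e set \<Rightarrow> ('e \<Rightarrow> 'v set) \<Rightarrow> nat" where
  "list_chromatic_index E V = (LEAST s. list_colourable E V s)"

end

theory Submission
  imports Defs
begin

text \<open>
  Call an edge avoiding a pair if it is disjoint from one of its members. Each of the r + 1
  t-useful pairs (e(2i-1), e(2i)) has at most tn - 3 common neighbours, hence at least r + 1
  avoiding edges, and Hall's theorem picks distinct ones g(i). With x(i) the member of the i-th
  pair disjoint from g(i), the pairs (x(i), g(i)) are pairwise disjoint: the x(i) are distinct and
  pairwise intersecting, so no g(j) is an x(i).

  A hypergraph with at most L + |M| edges, M a family of disjoint pairs of vertex-disjoint edges,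
  is L-list-edge-colourable. If the lists of some pair share a colour, give it to both edges,
  delete it from all other lists and recurse. Otherwise a set of edges containing a whole pair
  sees at least 2L colours, and a set containing no whole pair misses an edge of every pair, so
  has at most e(H) - |M| \<le> L edges; thus Hall's theorem colours all edges with distinct colours.
  For L = tn - 1 this bounds the list chromatic index by tn - 1.
\<close>

lemma hall_condition_residual:
  fixes A :: "'i \<Rightarrow> 'a set"
  assumes fin: "finite I" "\<forall>i\<in>I. finite (A i)"
    and hall: "\<forall>S\<subseteq>I. card S \<le> card (\<Union>(A ` S))"
    and tight: "S \<subseteq> I" "card (\<Union>(A ` S)) \<le> card S"
  shows "\<forall>R\<subseteq>I - S. card R \<le> card (\<Union>i\<in>R. A i - \<Union>(A ` S))"
proof (intro allI impI)
  fix R assume R: "R \<subseteq> I - S"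
  have finRS: "finite R" "finite S" using R tight(1) fin(1) finite_subset by blast+
  have "finite (\<Union>(A ` (R \<union> S)))" using finRS R tight(1) fin(2) by blast
  moreover have "(\<Union>i\<in>R. A i - \<Union>(A ` S)) = \<Union>(A ` (R \<union> S)) - \<Union>(A ` S)" by auto
  ultimately have "card (\<Union>i\<in>R. A i - \<Union>(A ` S)) = card (\<Union>(A ` (R \<union> S))) - card (\<Union>(A ` S))"
    by (simp add: card_Diff_subset finite_subset)
  moreover have "card (R \<union> S) = card R + card S" using R finRS by (subst card_Un_disjoint) auto
  then have "card R + card S \<le> card (\<Union>(A ` (R \<union> S)))"
    using hall R tight(1) by (metis Diff_subset Un_subset_iff order_trans)
  ultimately show "card R \<le> card (\<Union>i\<in>R. A i - \<Union>(A ` S))" using tight(2) by linarith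
qed

lemma hall_condition_remove_element:
  fixes A :: "'i \<Rightarrow> 'a set"
  assumes fin: "finite I" "\<forall>i\<in>I. finite (A i)"
    and slack: "\<forall>S. S \<subseteq> I \<and> S \<noteq> {} \<and> S \<noteq> I \<longrightarrow> card S < card (\<Union>(A ` S))"
    and "i \<in> I"
  shows "\<forall>S\<subseteq>I - {i}. card S \<le> card (\<Union>j\<in>S. A j - {a})"
proof (intro allI impI)
  fix S assume S: "S \<subseteq> I - {i}"
  show "card S \<le> card (\<Union>j\<in>S. A j - {a})"
  proof (cases "S = {}")
    case False
    with S \<open>i \<in> I\<close> have "card S < card (\<Union>(A ` S))" using slack by blast
    moreover have "finite (\<Union>(A ` S))" using S fin finite_subset by blast
    then have "card (\<Union>(A ` S)) \<le> card (\<Union>(A ` S) - {a}) + 1"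
      by (cases "a \<in> \<Union>(A ` S)") (auto simp: card_Diff_singleton_if)
    ultimately have "card S \<le> card (\<Union>(A ` S) - {a})" by linarith
    moreover have "(\<Union>j\<in>S. A j - {a}) = \<Union>(A ` S) - {a}" by blast
    ultimately show ?thesis by simp
  qed simp
qed

lemma inj_choice_combine:
  assumes "S \<subseteq> I" "inj_on f S" "\<forall>i\<in>S. f i \<in> A i"
    and "inj_on g (I - S)" "\<forall>i\<in>I - S. g i \<in> A i - f ` S"
  shows "\<exists>h. inj_on h I \<and> (\<forall>i\<in>I. h i \<in> A i)"
proof -
  have "f ` S \<inter> g ` (I - S) = {}"
  proof (rule equals0I)
    fix y assume "y \<in> f ` S \<inter> g ` (I - S)"
    then obtain i j where "i \<in> S" "j \<in> I - S" "g j = f i" by (metis IntE imageE)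
    then show False using assms(5) by (metis DiffD2 imageI)
  qed
  then have "inj_on (\<lambda>i. if i \<in> S then f i else g i) (S \<union> (I - S))"
    using assms(2,4) by (intro inj_on_disjoint_Un)
  moreover have "S \<union> (I - S) = I" using assms(1) by blast
  ultimately show ?thesis using assms(3,5) by auto
qed

text \<open>
  Halmos and Vaughan's induction: if some nonempty proper S \<subseteq> I is tight, match S, and then
  I - S inside the sets with \<Union>(A ` S) removed; otherwise every such S has slack, so some i
  may take any a \<in> A i, and a is removed from the other sets.
\<close>

theorem Hall_marriage:
  fixes A :: "'i \<Rightarrow> 'a set"
  assumes "finite I" "\<forall>i\<in>I. finite (A i)" "\<forall>S\<subseteq>I. card S \<le> card (\<Union>(A ` S))"
  shows "\<exists>f. inj_on f I \<and> (\<forall>i\<in>I. f i \<in> A i)"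
  using assms
proof (induction "card I" arbitrary: I A rule: less_induct)
  case less
  note fin = less.prems(1,2) and hall = less.prems(3)
  consider "I = {}"
    | (tight) S where "S \<subseteq> I" "S \<noteq> {}" "S \<noteq> I" "card (\<Union>(A ` S)) \<le> card S"
    | (slack) i where "i \<in> I" "\<forall>S. S \<subseteq> I \<and> S \<noteq> {} \<and> S \<noteq> I \<longrightarrow> card S < card (\<Union>(A ` S))"
    by (metis all_not_in_conv not_le)
  then show ?case
  proof cases
    case tight
    have "S \<subset> I" "I - S \<subset> I" using tight(1-3) by auto
    then have "finite S" "card S < card I" "card (I - S) < card I"
      using fin(1) by (auto simp: psubset_card_mono rev_finite_subset)
    moreover have "\<forall>i\<in>S. finite (A i)" "\<forall>R\<subseteq>S. card R \<le> card (\<Union>(A ` R))"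
      using tight(1) fin(2) hall by auto
    ultimately obtain f where f: "inj_on f S" "\<forall>i\<in>S. f i \<in> A i"
      using less.hyps[of S A] by blast
    obtain g where g: "inj_on g (I - S)" "\<forall>i\<in>I - S. g i \<in> A i - \<Union>(A ` S)"
      using less.hyps[of "I - S" "\<lambda>i. A i - \<Union>(A ` S)"] \<open>card (I - S) < card I\<close>
        hall_condition_residual[OF fin hall tight(1,4)] fin by blast
    have "f ` S \<subseteq> \<Union>(A ` S)" using f(2) by auto
    then have "\<forall>i\<in>I - S. g i \<in> A i - f ` S" using g(2) by (meson Diff_iff subsetD)
    from inj_choice_combine[OF tight(1) f g(1) this] show ?thesis .
  next
    case slack
    have "card {i} \<le> card (\<Union>(A ` {i}))" using slack(1) by (intro hall[rule_format]) simp
    then have "A i \<noteq> {}" by auto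
    then obtain a where a: "a \<in> A i" by blast
    have "card (I - {i}) < card I" using fin(1) slack(1) by (rule card_Diff1_less)
    moreover have "\<forall>j\<in>I - {i}. finite (A j - {a})" using fin(2) by blast
    ultimately obtain g where g: "inj_on g (I - {i})" "\<forall>j\<in>I - {i}. g j \<in> A j - {a}"
      using less.hyps[of "I - {i}" "\<lambda>j. A j - {a}"] fin(1)
        hall_condition_remove_element[OF fin slack(2,1)] by blast
    then show ?thesis using inj_choice_combine[of "{i}" I "\<lambda>_. a" A g] slack(1) a by auto
  qed auto
qed

lemma inj_choice_from_large_sets:
  fixes A :: "'i \<Rightarrow> 'a set"
  assumes "finite I" "\<forall>i\<in>I. finite (A i) \<and> card I \<le> card (A i)"
  shows "\<exists>f. inj_on f I \<and> (\<forall>i\<in>I. f i \<in> A i)"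
proof (rule Hall_marriage)
  show "\<forall>S\<subseteq>I. card S \<le> card (\<Union>(A ` S))"
  proof (intro allI impI)
    fix S assume S: "S \<subseteq> I"
    show "card S \<le> card (\<Union>(A ` S))"
    proof (cases "S = {}")
      case False
      then obtain i where "i \<in> S" by blast
      have "card S \<le> card I" using assms(1) S by (rule card_mono)
      also have "\<dots> \<le> card (A i)" using assms(2) S \<open>i \<in> S\<close> by blast
      also have "\<dots> \<le> card (\<Union>(A ` S))"
        using assms(2) S \<open>i \<in> S\<close> rev_finite_subset[OF assms(1) S] by (intro card_mono) auto
      finally show ?thesis .
    qed simp
  qed
qed (use assms in auto)

definition disjoint_pair_matching :: "'e set \<Rightarrow> ('e \<Rightarrow> 'v set) \<Rightarrow> ('e \<times> 'e) set \<Rightarrow> bool" where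
  "disjoint_pair_matching E V M \<longleftrightarrow>
     (\<forall>(x, y)\<in>M. x \<in> E \<and> y \<in> E \<and> x \<noteq> y \<and> V x \<inter> V y = {}) \<and>
     (\<forall>p\<in>M. \<forall>q\<in>M. p \<noteq> q \<longrightarrow> {fst p, snd p} \<inter> {fst q, snd q} = {})"

lemma disjoint_pair_matchingD:
  assumes "disjoint_pair_matching E V M" "(x, y) \<in> M"
  shows "x \<in> E" "y \<in> E" "x \<noteq> y" "V x \<inter> V y = {}"
  using assms unfolding disjoint_pair_matching_def by auto

lemma disjoint_pair_matching_disjoint:
  assumes "disjoint_pair_matching E V M" "p \<in> M" "q \<in> M" "p \<noteq> q"
  shows "{fst p, snd p} \<inter> {fst q, snd q} = {}"
  using assms unfolding disjoint_pair_matching_def by blast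

lemma disjoint_pair_matching_card:
  assumes "finite E" "disjoint_pair_matching E V M"
  shows "finite M" "2 * card M \<le> card E"
proof -
  have "M \<subseteq> E \<times> E" using disjoint_pair_matchingD(1,2)[OF assms(2)] by auto
  then show "finite M" using assms(1) finite_subset by blast
  have "inj_on fst M" "inj_on snd M" "fst ` M \<inter> snd ` M = {}"
    using disjoint_pair_matching_disjoint[OF assms(2)] disjoint_pair_matchingD(3)[OF assms(2)]
    unfolding inj_on_def by fastforce+
  then have "card (fst ` M \<union> snd ` M) = 2 * card M"
    using \<open>finite M\<close> by (simp add: card_Un_disjoint card_image)
  moreover have "fst ` M \<union> snd ` M \<subseteq> E" using disjoint_pair_matchingD(1,2)[OF assms(2)] by auto
  then have "card (fst ` M \<union> snd ` M) \<le> card E" by (rule card_mono[OF assms(1)])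
  ultimately show "2 * card M \<le> card E" by simp
qed

lemma disjoint_pair_matching_Diff:
  assumes "disjoint_pair_matching E V M" "(x, y) \<in> M"
  shows "disjoint_pair_matching (E - {x, y}) V (M - {(x, y)})"
proof -
  have "x' \<in> E - {x, y} \<and> y' \<in> E - {x, y} \<and> x' \<noteq> y' \<and> V x' \<inter> V y' = {}"
    if "(x', y') \<in> M - {(x, y)}" for x' y'
  proof -
    have "{x', y'} \<inter> {x, y} = {}"
      using disjoint_pair_matching_disjoint[OF assms(1), of "(x', y')" "(x, y)"] assms(2) that by auto
    then show ?thesis using disjoint_pair_matchingD[OF assms(1), of x' y'] that by auto
  qed
  moreover have "\<forall>p\<in>M - {(x, y)}. \<forall>q\<in>M - {(x, y)}. p \<noteq> q \<longrightarrow> {fst p, snd p} \<inter> {fst q, snd q} = {}"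
    using disjoint_pair_matching_disjoint[OF assms(1)] by blast
  ultimately show ?thesis unfolding disjoint_pair_matching_def by blast
qed

lemma disjoint_pair_matching_card_le_Diff:
  assumes "finite E" "disjoint_pair_matching E V M" "\<forall>(x, y)\<in>M. x \<notin> S \<or> y \<notin> S"
  shows "card M \<le> card (E - S)"
proof -
  define outside where "outside p = (if fst p \<notin> S then fst p else snd p)" for p
  have outside_in_pair: "outside p \<in> {fst p, snd p}" for p unfolding outside_def by simp
  have "inj_on outside M"
  proof (rule inj_onI, rule ccontr)
    fix p q assume pq: "p \<in> M" "q \<in> M" "outside p = outside q" "p \<noteq> q"
    then have "outside p \<in> {fst p, snd p} \<inter> {fst q, snd q}"
      using outside_in_pair[of p] outside_in_pair[of q] by simp
    then show False using disjoint_pair_matching_disjoint[OF assms(2) pq(1,2,4)] by simp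
  qed
  moreover have "outside p \<in> E - S" if "p \<in> M" for p
  proof -
    obtain x y where "p = (x, y)" by fastforce
    then show ?thesis
      using that assms(3) disjoint_pair_matchingD(1,2)[OF assms(2)] by (auto simp: outside_def)
  qed
  ultimately show ?thesis using assms(1) by (intro card_inj_on_le) blast+
qed

lemma hall_condition_disjoint_pair_lists:
  assumes "finite E" "disjoint_pair_matching E V M" "card E \<le> L + card M"
    and lists: "\<forall>e\<in>E. finite (C e) \<and> L \<le> card (C e)"
    and disjoint_lists: "\<forall>(x, y)\<in>M. C x \<inter> C y = {}"
  shows "\<forall>S\<subseteq>E. card S \<le> card (\<Union>(C ` S))"
proof (intro allI impI)
  fix S assume S: "S \<subseteq> E"
  have "finite S" using assms(1) S by (rule rev_finite_subset)
  then have finite_lists: "finite (\<Union>(C ` S))" using S lists by auto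
  have "card S \<le> card E" using assms(1) S by (rule card_mono)
  show "card S \<le> card (\<Union>(C ` S))"
  proof (cases "\<forall>(x, y)\<in>M. x \<notin> S \<or> y \<notin> S")
    case True
    show ?thesis
    proof (cases "S = {}")
      case False
      then obtain e where "e \<in> S" by blast
      have "card S \<le> L"
        using disjoint_pair_matching_card_le_Diff[OF assms(1,2) True] card_Diff_subset[OF \<open>finite S\<close> S]
          \<open>card S \<le> card E\<close> assms(3) by linarith
      also have "\<dots> \<le> card (C e)" using lists \<open>e \<in> S\<close> S by blast
      also have "\<dots> \<le> card (\<Union>(C ` S))" using \<open>e \<in> S\<close> finite_lists by (intro card_mono) auto
      finally show ?thesis .
    qed simp
  next
    case False
    then obtain x y where xy: "(x, y) \<in> M" "x \<in> S" "y \<in> S" by blast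
    then have "x \<in> E" "y \<in> E" using S by auto
    then have large: "L \<le> card (C x)" "L \<le> card (C y)" using lists by blast+
    have "2 * card M \<le> card E" using disjoint_pair_matching_card[OF assms(1,2)] by auto
    then have "card S \<le> 2 * L" using \<open>card S \<le> card E\<close> assms(3) by linarith
    also have "\<dots> \<le> card (C x) + card (C y)" using large by linarith
    also have "\<dots> = card (C x \<union> C y)"
      using xy S lists disjoint_lists by (intro card_Un_disjoint[symmetric]) auto
    also have "\<dots> \<le> card (\<Union>(C ` S))" using xy finite_lists by (intro card_mono) auto
    finally show ?thesis .
  qed
qed

lemma proper_edge_colouring_if_inj_on:
  "inj_on \<phi> E \<Longrightarrow> proper_edge_colouring E V \<phi>"
  unfolding proper_edge_colouring_def by (meson inj_onD)

lemma proper_edge_colouring_fun_upd_pair: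
  assumes "proper_edge_colouring (E - {x, y}) V \<phi>" "\<forall>e\<in>E - {x, y}. \<phi> e \<noteq> c"
    and "V x \<inter> V y = {}"
  shows "proper_edge_colouring E V (\<phi>(x := c, y := c))"
  unfolding proper_edge_colouring_def
proof (intro ballI impI)
  fix e f assume ef: "e \<in> E" "f \<in> E" "e \<noteq> f \<and> (\<phi>(x := c, y := c)) e = (\<phi>(x := c, y := c)) f"
  consider "e \<notin> {x, y}" "f \<notin> {x, y}" | "e \<in> {x, y}" "f \<in> {x, y}" | "(e \<in> {x, y}) \<noteq> (f \<in> {x, y})"
    by blast
  then show "V e \<inter> V f = {}"
  proof cases
    case 1
    then show ?thesis using assms(1) ef unfolding proper_edge_colouring_def by auto
  next
    case 2
    then show ?thesis using assms(3) ef(3) by (auto simp: Int_commute)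
  next
    case 3
    then show ?thesis using assms(2) ef by (auto split: if_splits)
  qed
qed

lemma list_colourableD:
  fixes C :: "'e \<Rightarrow> nat set"
  assumes "list_colourable E V s" "\<forall>e\<in>E. finite (C e) \<and> s \<le> card (C e)"
  shows "\<exists>\<phi>. (\<forall>e\<in>E. \<phi> e \<in> C e) \<and> proper_edge_colouring E V \<phi>"
  using assms(2) by (rule assms(1)[unfolded list_colourable_def, THEN spec[of _ C], THEN mp])

lemma list_colouring_common_colour_pair:
  fixes C :: "'e \<Rightarrow> nat set"
  assumes "list_colourable (E - {x, y}) V (L - 1)" "V x \<inter> V y = {}"
    and lists: "\<forall>e\<in>E. finite (C e) \<and> L \<le> card (C e)"
    and "c \<in> C x" "c \<in> C y"
  shows "\<exists>\<phi>. (\<forall>e\<in>E. \<phi> e \<in> C e) \<and> proper_edge_colouring E V \<phi>"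
proof -
  have "\<forall>e\<in>E - {x, y}. finite (C e - {c}) \<and> L - 1 \<le> card (C e - {c})"
  proof
    fix e assume "e \<in> E - {x, y}"
    then have "finite (C e)" "L \<le> card (C e)" using lists by auto
    then show "finite (C e - {c}) \<and> L - 1 \<le> card (C e - {c})"
      by (cases "c \<in> C e") (auto simp: card_Diff_singleton_if)
  qed
  from list_colourableD[OF assms(1) this] obtain \<phi>
    where \<phi>: "\<forall>e\<in>E - {x, y}. \<phi> e \<in> C e - {c}" "proper_edge_colouring (E - {x, y}) V \<phi>"
    by blast
  have "\<forall>e\<in>E - {x, y}. \<phi> e \<noteq> c" using \<phi>(1) by blast
  then have "proper_edge_colouring E V (\<phi>(x := c, y := c))"
    using \<phi>(2) assms(2) by (intro proper_edge_colouring_fun_upd_pair)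
  moreover have "\<forall>e\<in>E. (\<phi>(x := c, y := c)) e \<in> C e" using \<phi>(1) assms(4,5) by auto
  ultimately show ?thesis by blast
qed

lemma list_colourable_disjoint_pair_matching:
  assumes "finite E" "disjoint_pair_matching E V M" "card E \<le> L + card M"
  shows "list_colourable E V L"
  using assms
proof (induction "card M" arbitrary: E M L rule: less_induct)
  case less
  note matching = less.prems(2)
  have "finite M" "2 * card M \<le> card E" using disjoint_pair_matching_card[OF less.prems(1,2)] by auto
  show ?case unfolding list_colourable_def
  proof (intro allI impI)
    fix C :: "'a \<Rightarrow> nat set" assume lists: "\<forall>e\<in>E. finite (C e) \<and> L \<le> card (C e)"
    show "\<exists>\<phi>. (\<forall>e\<in>E. \<phi> e \<in> C e) \<and> proper_edge_colouring E V \<phi>"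
    proof (cases "\<exists>(x, y)\<in>M. C x \<inter> C y \<noteq> {}")
      case True
      then obtain x y c where xy: "(x, y) \<in> M" and c: "c \<in> C x" "c \<in> C y" by blast
      have smaller: "card (M - {(x, y)}) < card M" using \<open>finite M\<close> xy by (rule card_Diff1_less)
      have "card (E - {x, y}) = card E - 2"
        using disjoint_pair_matchingD(1-3)[OF matching xy] less.prems(1) by (simp add: card_Diff_subset)
      moreover have "card (M - {(x, y)}) = card M - 1" using \<open>finite M\<close> xy by simp
      ultimately have "card (E - {x, y}) \<le> (L - 1) + card (M - {(x, y)})"
        using smaller less.prems(3) \<open>2 * card M \<le> card E\<close> by linarith
      then have "list_colourable (E - {x, y}) V (L - 1)"
        using less.prems(1) by (intro less.hyps[OF smaller _ disjoint_pair_matching_Diff[OF matching xy]]) auto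
      from list_colouring_common_colour_pair[OF this disjoint_pair_matchingD(4)[OF matching xy] lists c]
      show ?thesis .
    next
      case False
      then have "\<forall>S\<subseteq>E. card S \<le> card (\<Union>(C ` S))"
        using hall_condition_disjoint_pair_lists[OF less.prems lists] by blast
      moreover have "\<forall>e\<in>E. finite (C e)" using lists by blast
      ultimately obtain \<phi> where "inj_on \<phi> E" "\<forall>e\<in>E. \<phi> e \<in> C e"
        using Hall_marriage[OF less.prems(1)] by blast
      then show ?thesis using proper_edge_colouring_if_inj_on by blast
    qed
  qed
qed

definition avoiding_edges :: "'e set \<Rightarrow> ('e \<Rightarrow> 'v set) \<Rightarrow> 'e \<Rightarrow> 'e \<Rightarrow> 'e set" where
  "avoiding_edges E V a b = E - {a, b} - (nbhd E V a \<inter> nbhd E V b)"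

lemma t_useful_card_avoiding_edges:
  assumes "finite E" "t_useful VH E V t a b"
  shows "card E + 1 \<le> t * card VH + card (avoiding_edges E V a b)"
proof -
  let ?common = "nbhd E V a \<inter> nbhd E V b" and ?avoiding = "E - {a, b} - nbhd E V a \<inter> nbhd E V b"
  have "card ?common + 3 \<le> t * card VH"
    using assms(2) unfolding t_useful_def of_nat_mult[symmetric] by linarith
  have "E \<subseteq> {a, b} \<union> ?common \<union> ?avoiding" by blast
  then have "card E \<le> card ({a, b} \<union> ?common \<union> ?avoiding)"
    using assms(1) by (intro card_mono) (auto simp: nbhd_def)
  also have "\<dots> \<le> card {a, b} + card ?common + card ?avoiding"
    using card_Un_le[of "{a, b} \<union> ?common" ?avoiding] card_Un_le[of "{a, b}" ?common] by linarith
  also have "\<dots> \<le> 2 + card ?common + card ?avoiding" by (cases "a = b") auto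
  finally show ?thesis
    using \<open>card ?common + 3 \<le> t * card VH\<close> unfolding avoiding_edges_def by linarith
qed

lemma disjoint_pair_matching_from_intersecting_pairs:
  fixes a b :: "'i \<Rightarrow> 'e"
  assumes "finite E" "finite I"
    and "X \<subseteq> E" and in_X: "\<forall>i\<in>I. a i \<in> X \<and> b i \<in> X"
    and intersecting: "\<forall>e\<in>X. \<forall>f\<in>X. V e \<inter> V f \<noteq> {}"
    and pairs_disjoint: "\<forall>i\<in>I. \<forall>j\<in>I. i \<noteq> j \<longrightarrow> {a i, b i} \<inter> {a j, b j} = {}"
    and avoiding: "\<forall>i\<in>I. card I \<le> card (avoiding_edges E V (a i) (b i))"
  shows "\<exists>M. disjoint_pair_matching E V M \<and> card M = card I"
proof -
  have "\<forall>i\<in>I. finite (avoiding_edges E V (a i) (b i)) \<and> card I \<le> card (avoiding_edges E V (a i) (b i))"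
    using avoiding assms(1) unfolding avoiding_edges_def by blast
  from inj_choice_from_large_sets[OF assms(2) this] obtain g
    where g_inj: "inj_on g I" and g: "\<forall>i\<in>I. g i \<in> avoiding_edges E V (a i) (b i)"
    by blast
  define x where "x i = (if V (a i) \<inter> V (g i) = {} then a i else b i)" for i
  have x: "x i \<in> {a i, b i}" "V (x i) \<inter> V (g i) = {}" "g i \<in> E" "g i \<notin> {a i, b i}" "x i \<in> E"
    if "i \<in> I" for i
    using g in_X \<open>X \<subseteq> E\<close> that unfolding x_def avoiding_edges_def nbhd_def by auto
  have x_intersecting: "V (x i) \<inter> V (x j) \<noteq> {}" if "i \<in> I" "j \<in> I" for i j
  proof -
    have "x i \<in> X" "x j \<in> X" using x(1)[OF that(1)] x(1)[OF that(2)] in_X that by auto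
    then show ?thesis using intersecting by blast
  qed
  have x_ne_g: "x i \<noteq> g j" if "i \<in> I" "j \<in> I" for i j
  proof (cases "i = j")
    case True
    then show ?thesis using x(1,4)[OF that(1)] by auto
  next
    case False
    then show ?thesis using x(2)[OF that(2)] x_intersecting[OF that] by (auto simp: Int_commute)
  qed
  define M where "M = (\<lambda>i. (x i, g i)) ` I"
  have "inj_on (\<lambda>i. (x i, g i)) I" using g_inj by (auto simp: inj_on_def)
  then have "card M = card I" unfolding M_def by (rule card_image)
  moreover have "disjoint_pair_matching E V M"
    unfolding disjoint_pair_matching_def M_def
  proof (intro conjI ballI impI)
    fix p assume "p \<in> (\<lambda>i. (x i, g i)) ` I"
    then obtain i where "i \<in> I" "p = (x i, g i)" by blast
    then show "case p of (u, v) \<Rightarrow> u \<in> E \<and> v \<in> E \<and> u \<noteq> v \<and> V u \<inter> V v = {}"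
      using x x_ne_g by auto
  next
    fix p q assume "p \<in> (\<lambda>i. (x i, g i)) ` I" "q \<in> (\<lambda>i. (x i, g i)) ` I" "p \<noteq> q"
    then obtain i j where ij: "i \<in> I" "j \<in> I" "i \<noteq> j" "p = (x i, g i)" "q = (x j, g j)" by blast
    have "{a i, b i} \<inter> {a j, b j} = {}" using pairs_disjoint ij(1-3) by blast
    then have "x i \<noteq> x j" using x(1)[OF ij(1)] x(1)[OF ij(2)] by auto
    moreover have "g i \<noteq> g j" using g_inj ij(1-3) by (auto dest: inj_onD)
    ultimately show "{fst p, snd p} \<inter> {fst q, snd q} = {}" using x_ne_g ij by auto
  qed
  ultimately show ?thesis by blast
qed

lemma inj_on_consecutive_pairs_disjoint:
  fixes es :: "nat \<Rightarrow> 'e"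
  assumes "inj_on es {1..2 * k}" "i \<in> {1..k}" "j \<in> {1..k}" "i \<noteq> j"
  shows "{es (2 * i - 1), es (2 * i)} \<inter> {es (2 * j - 1), es (2 * j)} = {}"
proof -
  have "{2 * i - 1, 2 * i} \<subseteq> {1..2 * k}" "{2 * j - 1, 2 * j} \<subseteq> {1..2 * k}"
    using assms(2,3) by auto
  moreover have "{2 * i - 1, 2 * i} \<inter> {2 * j - 1, 2 * j} = {}" using assms(2-4) by auto
  ultimately have "es ` {2 * i - 1, 2 * i} \<inter> es ` {2 * j - 1, 2 * j} = {}"
    by (metis image_empty inj_on_image_Int[OF assms(1)])
  then show ?thesis by simp
qed

theorem proposition4p3:
  fixes VH :: "'v set" and E :: "'e set" and V :: "'e \<Rightarrow> 'v set"
    and t n r :: nat and es :: "nat \<Rightarrow> 'e"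
  assumes "hypergraph VH E V"
    and "n = card VH"
    and "card E > t * n"
    and "r = card E - t * n"
    and "\<forall>i\<in>{1..2*r+2}. es i \<in> E"
    and "inj_on es {1..2*r+2}"
    and "\<forall>i\<in>{1..2*r+2}. \<forall>j\<in>{1..2*r+2}. V (es i) \<inter> V (es j) \<noteq> {}"
    and "\<forall>i\<in>{1..r+1}. t_useful VH E V t (es (2*i-1)) (es (2*i))"
  shows "list_chromatic_index E V < t * n"
proof -
  have "finite E" using assms(1) unfolding hypergraph_def by blast
  define a where "a i = es (2 * i - 1)" for i
  define b where "b i = es (2 * i)" for i
  have in_E: "es ` {1..2*r+2} \<subseteq> E"
    and intersecting: "\<forall>e\<in>es ` {1..2*r+2}. \<forall>f\<in>es ` {1..2*r+2}. V e \<inter> V f \<noteq> {}"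
    using assms(5,7) by auto
  have ends: "\<forall>i\<in>{1..r + 1}. a i \<in> es ` {1..2*r+2} \<and> b i \<in> es ` {1..2*r+2}"
    unfolding a_def b_def by force
  have "inj_on es {1..2 * (r + 1)}" using assms(6) by simp
  then have disjoint: "\<forall>i\<in>{1..r + 1}. \<forall>j\<in>{1..r + 1}. i \<noteq> j \<longrightarrow> {a i, b i} \<inter> {a j, b j} = {}"
    unfolding a_def b_def using inj_on_consecutive_pairs_disjoint by blast
  have avoiding: "\<forall>i\<in>{1..r + 1}. card {1..r + 1} \<le> card (avoiding_edges E V (a i) (b i))"
  proof
    fix i assume "i \<in> {1..r + 1}"
    from t_useful_card_avoiding_edges[OF \<open>finite E\<close> assms(8)[rule_format, OF this]] assms(2-4)
    show "card {1..r + 1} \<le> card (avoiding_edges E V (a i) (b i))" by (simp add: a_def b_def)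
  qed
  obtain M where M: "disjoint_pair_matching E V M" "card M = card {1..r + 1}"
    using disjoint_pair_matching_from_intersecting_pairs[OF \<open>finite E\<close> finite_atLeastAtMost
        in_E ends intersecting disjoint avoiding] by blast
  have "t_useful VH E V t (es 1) (es 2)" using assms(8)[rule_format, of 1] by simp
  then have "3 \<le> t * n" unfolding assms(2) t_useful_def of_nat_mult[symmetric] by linarith
  then have "card E \<le> (t * n - 1) + card M" using M(2) assms(3,4) by simp
  then have "list_colourable E V (t * n - 1)"
    by (rule list_colourable_disjoint_pair_matching[OF \<open>finite E\<close> M(1)])
  then have "list_chromatic_index E V \<le> t * n - 1"
    unfolding list_chromatic_index_def by (rule Least_le)
  then show ?thesis using \<open>3 \<le> t * n\<close> by linarith
qed

end
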